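(* MWL is subsumed by FO(ERDPQ): for every MWL formula there is an FO(ERDPQ) formula expressing the same query (position variables of sort $\pi$ being represented by path variables constrained to be prefixes of $\pi$). In particular WL is subsumed by FO(ERDPQ).
   Context: Data graphs. Fix a finite alphabet $\Sigma$ and infinite data domains $\mathcal D_{\mathrm{id}}$ and $\mathcal D_{\mathrm{prop}}$. A data graph is $G=(V,E,\mathrm{id},\mathrm{dataof})$ with $V$ a finite nonempty set of nodes, $E\subseteq V\times\Sigma\times V$, $\mathrm{id}:V\to\mathcal D_{\mathrm{id}}$ injective and $\mathrm{dataof}:V\to\mathcal D_{\mathrm{prop}}$. A path is a sequence $\rho=v_0a_1v_1\cdots a_nv_n$ ($n\ge 0$) with $(v_{i-1},a_i,v_i)\in E$ for all $i$; its length is $n$, its positions are $0,\dots,n$. Its data path is $d_0a_1d_1\cdots a_nd_n$ with $d_i=(\mathrm{id}(v_i),\mathrm{dataof}(v_i))$. RDPA. An $n$-ary register data path automaton (RDPA) has finitely many states partitioned into word states and data states, an initial data state, a set of final word states, and finitely many registers, each an id-register (values in $\mathcal D_{\mathrm{id}}\cup\{\sharp\}$) or a data-register (values in $\mathcal D_{\mathrm{prop}}\cup\{\sharp\}$), all initially $\sharp$. It reads words alternating between data letters and word letters, starting and ending with a data letter. From a word state it reads a letter of $(\Sigma\cup\{\sharp\})^n$ via a transition $p\xrightarrow{a}q$ to a data state, leaving registers unchanged. From a data state it reads a data letter (an $n$-tuple of ids and an $n$-tuple of property values, each possibly $\sharp$) via a transition whose guard is a conjunction of (well-typed) equalities/disequalities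 between registers, input components and constants, and whose update assigns to some registers an input component, a register value or a constant; it then moves to a word state. It accepts nondeterministically if some run ends in a final state. A tuple $(u_1,\dots,u_n)$ of data paths is accepted if their convolution (position-wise tuple, shorter ones padded with $\sharp$ to the length of the longest) is accepted. FO(ERDPQ). Formulas use node variables (ranging over $V$) and path variables (ranging over paths of $G$). Atoms: $\pi=\omega$; $x=y$; $(x,\pi,y)$ ("$\pi$ is a path from $x$ to $y$"); $(\pi_1,\dots,\pi_n)\in A$ for an $n$-ary RDPA $A$ ("the tuple of data paths of $\pi_1,\dots,\pi_n$ is accepted by $A$"). Formulas are closed under $\neg,\wedge,\exists x,\exists\pi$ with standard semantics. WL (walk logic). Path variables $\pi,\omega,\dots$ range over paths; each position variable $\ell^\pi$ has a sort $\pi$ and ranges over positions of the path assigned to $\pi$. Atoms: $E_a(\ell^\pi,m^\pi)$ ($m=\ell+1$ and the $m$-th label of the path is $a$); $\ell^\pi<m^\pi$ (same sort only); $\ell^\pi\equiv_{\mathrm{id}} n^\omega$ (the nodes at these positions are equal); $\ell^\pi\equiv_{\mathrm{data}} n^\omega$ (these nodes have equal $\mathrm{dataof}$). Closed under $\neg,\vee,\exists\ell^\pi,\exists\pi$. MWL (multi-path walk logic) is WL extended with atoms $\ell^\pi<n^\omega$ for arbitrary (possibly different) sorts $\pi,\omega$, true iff the position assigned to $\ell^\pi$ is smaller, as an integer, than the position assigned to $n^\omega$. *)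

theory Defs
  imports Main "HOL-Library.Nat_Bijection"
begin

record ('v, 'a, 'i, 'd) dgraph =
  V :: "'v set"
  E :: "('v \<times> 'a \<times> 'v) set"
  idf :: "'v \<Rightarrow> 'i"
  dataof :: "'v \<Rightarrow> 'd"

definition wf_dgraph :: "('v, 'a, 'i, 'd) dgraph \<Rightarrow> bool" where
  "wf_dgraph G \<longleftrightarrow> finite (V G) \<and> V G \<noteq> {} \<and> E G \<subseteq> V G \<times> UNIV \<times> V G
     \<and> inj_on (idf G) (V G)"

text \<open>A path v0 a1 v1 ... an vn is represented as (v0, [(a1,v1),...,(an,vn)]).\<close>
type_synonym ('v, 'a) path = "'v \<times> ('a \<times> 'v) list"

definition nodes :: "('v, 'a) path \<Rightarrow> 'v list" where
  "nodes p = fst p # map snd (snd p)"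

definition plen :: "('v, 'a) path \<Rightarrow> nat" where
  "plen p = length (snd p)"

definition is_path :: "('v, 'a, 'i, 'd) dgraph \<Rightarrow> ('v, 'a) path \<Rightarrow> bool" where
  "is_path G p \<longleftrightarrow> fst p \<in> V G \<and>
     (\<forall>i < plen p. (nodes p ! i, fst (snd p ! i), nodes p ! Suc i) \<in> E G)"

definition path_prefix :: "('v, 'a) path \<Rightarrow> nat \<Rightarrow> ('v, 'a) path" where
  "path_prefix p k = (fst p, take k (snd p))"

type_synonym ('a, 'i, 'd) dpath = "('i \<times> 'd) \<times> ('a \<times> ('i \<times> 'd)) list"

definition datapath :: "('v, 'a, 'i, 'd) dgraph \<Rightarrow> ('v, 'a) path \<Rightarrow> ('a, 'i, 'd) dpath" where
  "datapath G p = ((idf G (fst p), dataof G (fst p)),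
                   map (\<lambda>(a, v). (a, (idf G v, dataof G v))) (snd p))"

section \<open>Register data path automata\<close>

text \<open>Terms of a guard/update: a register, an input component, or a constant
  (None encodes the symbol sharp).\<close>
datatype 'x tm = Reg nat | Inp nat | Cst "'x option"

datatype ('i, 'd) gatom =
    IEq "'i tm" "'i tm" | INe "'i tm" "'i tm"
  | DEq "'d tm" "'d tm" | DNe "'d tm" "'d tm"

text \<open>A simultaneous update: for each id-register (resp. data-register) optionally a new term.\<close>
type_synonym ('i, 'd) upd = "(nat \<Rightarrow> 'i tm option) \<times> (nat \<Rightarrow> 'd tm option)"

type_synonym ('i, 'd) regval = "(nat \<Rightarrow> 'i option) \<times> (nat \<Rightarrow> 'd option)"
type_synonym ('i, 'd) dletter = "('i option \<times> 'd option) list"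
type_synonym 'a wletter = "'a option list"

text \<open>States are natural numbers; wstates are the word states, the remaining
  elements of states the data states.  Id-registers are 0..<nidr,
  data-registers are 0..<ndr.\<close>
record ('a, 'i, 'd) rdpa =
  arity :: nat
  states :: "nat set"
  wstates :: "nat set"
  init :: nat
  final :: "nat set"
  nidr :: nat
  ndr :: nat
  wtrans :: "(nat \<times> 'a wletter \<times> nat) set"
  dtrans :: "(nat \<times> ('i, 'd) gatom list \<times> ('i, 'd) upd \<times> nat) set"

fun tm_ok :: "nat \<Rightarrow> nat \<Rightarrow> 'x tm \<Rightarrow> bool" where
  "tm_ok nr n (Reg r) = (r < nr)"
| "tm_ok nr n (Inp j) = (j < n)"
| "tm_ok nr n (Cst c) = True"

fun gatom_ok :: "('a, 'i, 'd) rdpa \<Rightarrow> ('i, 'd) gatom \<Rightarrow> bool" where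
  "gatom_ok A (IEq s t) = (tm_ok (nidr A) (arity A) s \<and> tm_ok (nidr A) (arity A) t)"
| "gatom_ok A (INe s t) = (tm_ok (nidr A) (arity A) s \<and> tm_ok (nidr A) (arity A) t)"
| "gatom_ok A (DEq s t) = (tm_ok (ndr A) (arity A) s \<and> tm_ok (ndr A) (arity A) t)"
| "gatom_ok A (DNe s t) = (tm_ok (ndr A) (arity A) s \<and> tm_ok (ndr A) (arity A) t)"

definition upd_ok :: "('a, 'i, 'd) rdpa \<Rightarrow> ('i, 'd) upd \<Rightarrow> bool" where
  "upd_ok A u \<longleftrightarrow>
     (\<forall>r. (r \<ge> nidr A \<longrightarrow> fst u r = None) \<and>
          (\<forall>t. fst u r = Some t \<longrightarrow> tm_ok (nidr A) (arity A) t)) \<and>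
     (\<forall>r. (r \<ge> ndr A \<longrightarrow> snd u r = None) \<and>
          (\<forall>t. snd u r = Some t \<longrightarrow> tm_ok (ndr A) (arity A) t))"

definition wf_rdpa :: "('a, 'i, 'd) rdpa \<Rightarrow> bool" where
  "wf_rdpa A \<longleftrightarrow>
     finite (states A) \<and> wstates A \<subseteq> states A \<and>
     init A \<in> states A - wstates A \<and> final A \<subseteq> wstates A \<and>
     finite (wtrans A) \<and> finite (dtrans A) \<and>
     (\<forall>(p, w, q) \<in> wtrans A. p \<in> wstates A \<and> q \<in> states A - wstates A \<and> length w = arity A) \<and>
     (\<forall>(p, g, u, q) \<in> dtrans A. p \<in> states A - wstates A \<and> q \<in> wstates A \<and>
        (\<forall>at \<in> set g. gatom_ok A at) \<and> upd_ok A u)"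

fun tm_val :: "(nat \<Rightarrow> 'x option) \<Rightarrow> (nat \<Rightarrow> 'x option) \<Rightarrow> 'x tm \<Rightarrow> 'x option" where
  "tm_val R I (Reg r) = R r"
| "tm_val R I (Inp j) = I j"
| "tm_val R I (Cst c) = c"

definition inp_id :: "('i, 'd) dletter \<Rightarrow> nat \<Rightarrow> 'i option" where
  "inp_id d j = fst (d ! j)"

definition inp_data :: "('i, 'd) dletter \<Rightarrow> nat \<Rightarrow> 'd option" where
  "inp_data d j = snd (d ! j)"

fun gatom_sat :: "('i, 'd) regval \<Rightarrow> ('i, 'd) dletter \<Rightarrow> ('i, 'd) gatom \<Rightarrow> bool" where
  "gatom_sat R d (IEq s t) = (tm_val (fst R) (inp_id d) s = tm_val (fst R) (inp_id d) t)"
| "gatom_sat R d (INe s t) = (tm_val (fst R) (inp_id d) s \<noteq> tm_val (fst R) (inp_id d) t)"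
| "gatom_sat R d (DEq s t) = (tm_val (snd R) (inp_data d) s = tm_val (snd R) (inp_data d) t)"
| "gatom_sat R d (DNe s t) = (tm_val (snd R) (inp_data d) s \<noteq> tm_val (snd R) (inp_data d) t)"

definition guard_sat :: "('i, 'd) regval \<Rightarrow> ('i, 'd) dletter \<Rightarrow> ('i, 'd) gatom list \<Rightarrow> bool" where
  "guard_sat R d g \<longleftrightarrow> (\<forall>at \<in> set g. gatom_sat R d at)"

definition apply_upd :: "('i, 'd) upd \<Rightarrow> ('i, 'd) regval \<Rightarrow> ('i, 'd) dletter \<Rightarrow> ('i, 'd) regval" where
  "apply_upd u R d =
     ((\<lambda>r. case fst u r of None \<Rightarrow> fst R r | Some t \<Rightarrow> tm_val (fst R) (inp_id d) t),
      (\<lambda>r. case snd u r of None \<Rightarrow> snd R r | Some t \<Rightarrow> tm_val (snd R) (inp_data d) t))"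

text \<open>Acceptance from data state q with register valuation R of the remaining input
  d (w1 d1) ... (wk dk).\<close>
fun acc :: "('a, 'i, 'd) rdpa \<Rightarrow> nat \<Rightarrow> ('i, 'd) regval \<Rightarrow> ('i, 'd) dletter
            \<Rightarrow> ('a wletter \<times> ('i, 'd) dletter) list \<Rightarrow> bool" where
  "acc A q R d [] =
     (\<exists>g u p. (q, g, u, p) \<in> dtrans A \<and> guard_sat R d g \<and> p \<in> final A)"
| "acc A q R d ((w, d') # rest) =
     (\<exists>g u p. (q, g, u, p) \<in> dtrans A \<and> guard_sat R d g \<and>
        (\<exists>q'. (p, w, q') \<in> wtrans A \<and> acc A q' (apply_upd u R d) d' rest))"

definition dplen :: "('a, 'i, 'd) dpath \<Rightarrow> nat" where
  "dplen u = length (snd u)"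

definition dletter_at :: "('a, 'i, 'd) dpath list \<Rightarrow> nat \<Rightarrow> ('i, 'd) dletter" where
  "dletter_at us i = map (\<lambda>u.
      if i = 0 then (Some (fst (fst u)), Some (snd (fst u)))
      else if i \<le> dplen u then (Some (fst (snd (snd u ! (i - 1)))), Some (snd (snd (snd u ! (i - 1)))))
      else (None, None)) us"

definition wletter_at :: "('a, 'i, 'd) dpath list \<Rightarrow> nat \<Rightarrow> 'a wletter" where
  "wletter_at us i = map (\<lambda>u. if 1 \<le> i \<and> i \<le> dplen u then Some (fst (snd u ! (i - 1))) else None) us"

definition maxlen :: "('a, 'i, 'd) dpath list \<Rightarrow> nat" where
  "maxlen us = foldr max (map dplen us) 0"

definition accepts :: "('a, 'i, 'd) rdpa \<Rightarrow> ('a, 'i, 'd) dpath list \<Rightarrow> bool" where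
  "accepts A us \<longleftrightarrow>
     acc A (init A) (\<lambda>_. None, \<lambda>_. None) (dletter_at us 0)
       (map (\<lambda>i. (wletter_at us i, dletter_at us i)) [1..<Suc (maxlen us)])"

section \<open>FO(ERDPQ)\<close>

datatype ('a, 'i, 'd) fo =
    PEq nat nat
  | NEq nat nat
  | Reach nat nat nat
  | InA "nat list" "('a, 'i, 'd) rdpa"
  | FNot "('a, 'i, 'd) fo"
  | FAnd "('a, 'i, 'd) fo" "('a, 'i, 'd) fo"
  | ExN nat "('a, 'i, 'd) fo"
  | ExP nat "('a, 'i, 'd) fo"

fun wf_fo :: "('a, 'i, 'd) fo \<Rightarrow> bool" where
  "wf_fo (InA ps A) = (wf_rdpa A \<and> length ps = arity A)"
| "wf_fo (FNot f) = wf_fo f"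
| "wf_fo (FAnd f g) = (wf_fo f \<and> wf_fo g)"
| "wf_fo (ExN x f) = wf_fo f"
| "wf_fo (ExP x f) = wf_fo f"
| "wf_fo _ = True"

fun fo_sat :: "('v, 'a, 'i, 'd) dgraph \<Rightarrow> (nat \<Rightarrow> 'v) \<Rightarrow> (nat \<Rightarrow> ('v, 'a) path)
               \<Rightarrow> ('a, 'i, 'd) fo \<Rightarrow> bool" where
  "fo_sat G \<nu> \<mu> (PEq p q) = (\<mu> p = \<mu> q)"
| "fo_sat G \<nu> \<mu> (NEq x y) = (\<nu> x = \<nu> y)"
| "fo_sat G \<nu> \<mu> (Reach x p y) = (fst (\<mu> p) = \<nu> x \<and> last (nodes (\<mu> p)) = \<nu> y)"
| "fo_sat G \<nu> \<mu> (InA ps A) = accepts A (map (\<lambda>p. datapath G (\<mu> p)) ps)"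
| "fo_sat G \<nu> \<mu> (FNot f) = (\<not> fo_sat G \<nu> \<mu> f)"
| "fo_sat G \<nu> \<mu> (FAnd f g) = (fo_sat G \<nu> \<mu> f \<and> fo_sat G \<nu> \<mu> g)"
| "fo_sat G \<nu> \<mu> (ExN x f) = (\<exists>v \<in> V G. fo_sat G (\<nu>(x := v)) \<mu> f)"
| "fo_sat G \<nu> \<mu> (ExP p f) = (\<exists>r. is_path G r \<and> fo_sat G \<nu> (\<mu>(p := r)) f)"

section \<open>(Multi-path) walk logic\<close>

text \<open>A position variable l of sort pi is the pair (l, pi).\<close>
type_synonym posvar = "nat \<times> nat"

datatype 'a mwl =
    Edge 'a nat nat nat
  | Lt posvar posvar
  | EqId posvar posvar
  | EqData posvar posvar
  | MNot "'a mwl"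
  | MOr "'a mwl" "'a mwl"
  | ExPos posvar "'a mwl"
  | ExPath nat "'a mwl"

fun fpv :: "'a mwl \<Rightarrow> posvar set" where
  "fpv (Edge a l m p) = {(l, p), (m, p)}"
| "fpv (Lt x y) = {x, y}"
| "fpv (EqId x y) = {x, y}"
| "fpv (EqData x y) = {x, y}"
| "fpv (MNot f) = fpv f"
| "fpv (MOr f g) = fpv f \<union> fpv g"
| "fpv (ExPos x f) = fpv f - {x}"
| "fpv (ExPath p f) = fpv f"

fun wf_mwl :: "'a mwl \<Rightarrow> bool" where
  "wf_mwl (MNot f) = wf_mwl f"
| "wf_mwl (MOr f g) = (wf_mwl f \<and> wf_mwl g)"
| "wf_mwl (ExPos x f) = wf_mwl f"
| "wf_mwl (ExPath p f) = (wf_mwl f \<and> (\<forall>x \<in> fpv f. snd x \<noteq> p))"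
| "wf_mwl _ = True"

fun is_wl :: "'a mwl \<Rightarrow> bool" where
  "is_wl (Lt x y) = (snd x = snd y)"
| "is_wl (MNot f) = is_wl f"
| "is_wl (MOr f g) = (is_wl f \<and> is_wl g)"
| "is_wl (ExPos x f) = is_wl f"
| "is_wl (ExPath p f) = is_wl f"
| "is_wl _ = True"

definition node_at :: "(nat \<Rightarrow> ('v, 'a) path) \<Rightarrow> (posvar \<Rightarrow> nat) \<Rightarrow> posvar \<Rightarrow> 'v" where
  "node_at \<mu> \<kappa> x = nodes (\<mu> (snd x)) ! \<kappa> x"

fun mwl_sat :: "('v, 'a, 'i, 'd) dgraph \<Rightarrow> (nat \<Rightarrow> ('v, 'a) path) \<Rightarrow> (posvar \<Rightarrow> nat)
                \<Rightarrow> 'a mwl \<Rightarrow> bool" where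
  "mwl_sat G \<mu> \<kappa> (Edge a l m p) =
     (\<kappa> (m, p) = Suc (\<kappa> (l, p)) \<and> \<kappa> (m, p) \<le> plen (\<mu> p) \<and>
      fst (snd (\<mu> p) ! \<kappa> (l, p)) = a)"
| "mwl_sat G \<mu> \<kappa> (Lt x y) = (\<kappa> x < \<kappa> y)"
| "mwl_sat G \<mu> \<kappa> (EqId x y) = (node_at \<mu> \<kappa> x = node_at \<mu> \<kappa> y)"
| "mwl_sat G \<mu> \<kappa> (EqData x y) = (dataof G (node_at \<mu> \<kappa> x) = dataof G (node_at \<mu> \<kappa> y))"
| "mwl_sat G \<mu> \<kappa> (MNot f) = (\<not> mwl_sat G \<mu> \<kappa> f)"
| "mwl_sat G \<mu> \<kappa> (MOr f g) = (mwl_sat G \<mu> \<kappa> f \<or> mwl_sat G \<mu> \<kappa> g)"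
| "mwl_sat G \<mu> \<kappa> (ExPos x f) = (\<exists>k \<le> plen (\<mu> (snd x)). mwl_sat G \<mu> (\<kappa>(x := k)) f)"
| "mwl_sat G \<mu> \<kappa> (ExPath p f) = (\<exists>r. is_path G r \<and> mwl_sat G (\<mu>(p := r)) \<kappa> f)"

text \<open>Path variable pi of the MWL formula is FO path variable 2*pi; position variable
  (l, pi) is FO path variable 2*prod_encode(l,pi)+1, interpreted as the prefix of pi
  of length equal to the position.\<close>
definition repr_val :: "(nat \<Rightarrow> ('v, 'a) path) \<Rightarrow> (posvar \<Rightarrow> nat) \<Rightarrow> nat \<Rightarrow> ('v, 'a) path" where
  "repr_val \<mu> \<kappa> n =
     (if even n then \<mu> (n div 2)
      else (let x = prod_decode (n div 2) in path_prefix (\<mu> (snd x)) (\<kappa> x)))"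

end

theory Submission
  imports Defs
begin

text \<open>Path variables are kept, and a position \<open>\<ell>\<close> of sort \<open>\<pi>\<close> is represented by the prefix of
  \<open>\<pi>\<close> ending at \<open>\<ell>\<close>. The MWL atoms then become definable: \<open>\<ell> < m\<close> says that the prefix
  for \<open>\<ell>\<close> is the shorter one, and \<open>E\<^sub>a(\<ell>, m)\<close> that the prefix for \<open>m\<close> extends the one for
  \<open>\<ell>\<close> by a single \<open>a\<close>-step, both checked by RDPAs reading the convolution; id-equality of
  positions is equality of the end nodes of the prefixes, and data-equality is checked by an
  RDPA on the single-node paths at those end nodes. A position quantifier becomes a path
  quantifier restricted to the paths that an RDPA accepts together with \<open>\<pi>\<close> by comparing
  them letter by letter; since ids are injective, these are exactly the prefixes of \<open>\<pi>\<close>.\<close>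

lemma length_nodes [simp]: "length (nodes p) = Suc (plen p)"
  by (simp add: nodes_def plen_def)

lemma nth_nodes_0 [simp]: "nodes p ! 0 = fst p"
  by (simp add: nodes_def)

lemma nth_nodes_Suc: "i < plen p \<Longrightarrow> nodes p ! Suc i = snd (snd p ! i)"
  by (simp add: nodes_def plen_def)

lemma last_nodes: "last (nodes p) = nodes p ! plen p"
  using last_conv_nth[of "nodes p"] by (simp add: nodes_def plen_def)

lemma fst_path_prefix [simp]: "fst (path_prefix p k) = fst p"
  by (simp add: path_prefix_def)

lemma plen_path_prefix [simp]: "k \<le> plen p \<Longrightarrow> plen (path_prefix p k) = k"
  by (simp add: path_prefix_def plen_def)

lemma nodes_path_prefix: "nodes (path_prefix p k) = take (Suc k) (nodes p)"
  by (simp add: path_prefix_def nodes_def take_map)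

lemma last_nodes_path_prefix: "k \<le> plen p \<Longrightarrow> last (nodes (path_prefix p k)) = nodes p ! k"
  by (simp add: nodes_path_prefix take_Suc_conv_app_nth)

lemma nth_nodes_path_prefix: "j \<le> k \<Longrightarrow> nodes (path_prefix p k) ! j = nodes p ! j"
  by (simp add: nodes_path_prefix)

lemma nth_snd_path_prefix: "i < k \<Longrightarrow> snd (path_prefix p k) ! i = snd p ! i"
  by (simp add: path_prefix_def)

lemma is_path_path_prefix:
  assumes "is_path G p"
  shows "is_path G (path_prefix p k)"
  unfolding is_path_def
proof (intro conjI allI impI)
  show "fst (path_prefix p k) \<in> V G"
    using assms by (simp add: is_path_def)
  fix i assume "i < plen (path_prefix p k)"
  then have "i < k" "i < plen p"
    by (auto simp: path_prefix_def plen_def)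
  then show "(nodes (path_prefix p k) ! i, fst (snd (path_prefix p k) ! i),
      nodes (path_prefix p k) ! Suc i) \<in> E G"
    using assms by (simp add: is_path_def nth_nodes_path_prefix nth_snd_path_prefix)
qed

lemma is_path_single: "v \<in> V G \<Longrightarrow> is_path G (v, [])"
  by (simp add: is_path_def plen_def)

lemma fst_in_V: "is_path G p \<Longrightarrow> fst p \<in> V G"
  by (simp add: is_path_def)

lemma nth_nodes_in_V:
  assumes "wf_dgraph G" "is_path G p" "i \<le> plen p"
  shows "nodes p ! i \<in> V G"
proof (cases i)
  case (Suc j)
  then have "(nodes p ! j, fst (snd p ! j), nodes p ! i) \<in> E G"
    using assms(2,3) by (simp add: is_path_def)
  then show ?thesis
    using assms(1) by (auto simp: wf_dgraph_def)
qed (use assms(2) in \<open>simp add: is_path_def\<close>)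

lemma last_nodes_in_V: "wf_dgraph G \<Longrightarrow> is_path G p \<Longrightarrow> last (nodes p) \<in> V G"
  by (simp add: last_nodes nth_nodes_in_V)

lemma snd_set_in_V:
  assumes "wf_dgraph G" "is_path G p"
  shows "snd ` set (snd p) \<subseteq> V G"
proof
  fix v assume "v \<in> snd ` set (snd p)"
  then obtain i where "i < plen p" "v = snd (snd p ! i)"
    by (auto simp: in_set_conv_nth plen_def)
  then show "v \<in> V G"
    using nth_nodes_in_V[OF assms, of "Suc i"] by (simp add: nth_nodes_Suc)
qed

lemma dplen_datapath [simp]: "dplen (datapath G p) = plen p"
  by (simp add: datapath_def dplen_def plen_def)

lemma label_datapath: "i < plen p \<Longrightarrow> fst (snd (datapath G p) ! i) = fst (snd p ! i)"
  by (simp add: datapath_def plen_def split: prod.splits)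

lemma datapath_path_prefix:
  "datapath G (path_prefix p k) = (fst (datapath G p), take k (snd (datapath G p)))"
  by (simp add: datapath_def path_prefix_def take_map)

lemma inj_on_datapath:
  assumes "wf_dgraph G"
  shows "inj_on (datapath G) {p. is_path G p}"
proof
  fix p r assume p: "p \<in> {p. is_path G p}" and r: "r \<in> {p. is_path G p}"
    and eq: "datapath G p = datapath G r"
  have inj: "inj_on (idf G) (V G)"
    using assms by (simp add: wf_dgraph_def)
  from eq have "idf G (fst p) = idf G (fst r)"
    by (simp add: datapath_def)
  then have "fst p = fst r"
    using inj_onD[OF inj _ fst_in_V fst_in_V] p r by auto
  let ?f = "\<lambda>(a, v). (a, (idf G v, dataof G v))"
  have "snd ` (set (snd p) \<union> set (snd r)) \<subseteq> V G"
    using p r snd_set_in_V[OF assms, of p] snd_set_in_V[OF assms, of r] by (simp add: image_Un)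
  then have "inj_on ?f (set (snd p) \<union> set (snd r))"
  proof (intro inj_onI)
    fix x y assume "x \<in> set (snd p) \<union> set (snd r)" "y \<in> set (snd p) \<union> set (snd r)"
      and "?f x = ?f y"
    with \<open>snd ` _ \<subseteq> V G\<close> have "snd x \<in> V G" "snd y \<in> V G"
      "idf G (snd x) = idf G (snd y)" "fst x = fst y"
      by (auto split: prod.splits)
    then show "x = y"
      using inj_onD[OF inj] by (simp add: prod_eq_iff)
  qed
  moreover from eq have "map ?f (snd p) = map ?f (snd r)"
    by (simp add: datapath_def)
  ultimately have "snd p = snd r"
    by (simp add: inj_on_map_eq_map)
  with \<open>fst p = fst r\<close> show "p = r"
    by (simp add: prod_eq_iff)
qed

definition conv_suffix ::
    "('a, 'i, 'd) dpath list \<Rightarrow> nat \<Rightarrow> nat \<Rightarrow> ('a wletter \<times> ('i, 'd) dletter) list" where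
  "conv_suffix us j m = map (\<lambda>i. (wletter_at us i, dletter_at us i)) [Suc j..<Suc m]"

lemma conv_suffix_self [simp]: "conv_suffix us m m = []"
  by (simp add: conv_suffix_def)

lemma conv_suffix_Cons:
  "j < m \<Longrightarrow>
    conv_suffix us j m = (wletter_at us (Suc j), dletter_at us (Suc j)) # conv_suffix us (Suc j) m"
  by (simp add: conv_suffix_def upt_conv_Cons del: upt_Suc)

lemma accepts_conv_suffix:
  "accepts A us \<longleftrightarrow>
    acc A (init A) (\<lambda>_. None, \<lambda>_. None) (dletter_at us 0) (conv_suffix us 0 (maxlen us))"
  by (simp add: accepts_def conv_suffix_def)

lemma maxlen_pair [simp]: "maxlen [du, dw] = max (dplen du) (dplen dw)"
  by (simp add: maxlen_def)

lemma length_wletter_at [simp]: "length (wletter_at us i) = length us"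
  by (simp add: wletter_at_def)

definition no_update :: "('i, 'd) upd" where
  "no_update = (\<lambda>_. None, \<lambda>_. None)"

lemma apply_upd_no_update [simp]: "apply_upd no_update R d = R"
  by (simp add: apply_upd_def no_update_def)

lemma upd_ok_no_update: "upd_ok A no_update"
  by (simp add: upd_ok_def no_update_def)

lemma finite_pair_wletters: "finite {w :: 'a::finite wletter. length w = 2}"
  using finite_lists_length_eq[of "UNIV :: 'a option set" 2] by simp

definition shorter_rdpa :: "('a, 'i, 'd) rdpa" where
  "shorter_rdpa = \<lparr>arity = 2, states = {0, 1, 2}, wstates = {1, 2}, init = 0, final = {2},
     nidr = 0, ndr = 0,
     wtrans = (\<lambda>w. (1, w, 0)) ` {w. length w = 2},
     dtrans = {(0, [], no_update, 1), (0, [IEq (Inp 0) (Cst None)], no_update, 2)}\<rparr>"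

lemma shorter_rdpa_simps [simp]:
  "arity shorter_rdpa = 2" "init shorter_rdpa = 0" "final shorter_rdpa = {2}"
  "dtrans shorter_rdpa = {(0, [], no_update, 1), (0, [IEq (Inp 0) (Cst None)], no_update, 2)}"
  "(p, w, q) \<in> wtrans shorter_rdpa \<longleftrightarrow> p = 1 \<and> q = 0 \<and> length w = 2"
  by (auto simp: shorter_rdpa_def)

lemma wf_shorter_rdpa: "wf_rdpa (shorter_rdpa :: ('a::finite, 'i, 'd) rdpa)"
  by (auto simp: wf_rdpa_def shorter_rdpa_def finite_pair_wletters upd_ok_no_update)

lemma acc_shorter_rdpa:
  assumes "length us = 2" "j \<le> m"
  shows "acc shorter_rdpa 0 R (dletter_at us j) (conv_suffix us j m) \<longleftrightarrow> fst (dletter_at us m ! 0) = None"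
  using assms(2)
proof (induction j rule: inc_induct)
  case base
  then show ?case by (simp add: guard_sat_def inp_id_def)
next
  case (step j)
  then show ?case
    using assms(1) by (simp add: conv_suffix_Cons guard_sat_def inp_id_def)
qed

lemma accepts_shorter_rdpa: "accepts shorter_rdpa [du, dw] \<longleftrightarrow> dplen du < dplen dw"
proof -
  have "accepts shorter_rdpa [du, dw] \<longleftrightarrow>
      fst (dletter_at [du, dw] (max (dplen du) (dplen dw)) ! 0) = None"
    by (simp add: accepts_conv_suffix acc_shorter_rdpa)
  then show ?thesis
    by (auto simp: dletter_at_def)
qed

text \<open>Loops through states 0 and 1 up to the last position of the first path, then reads one
  more \<open>a\<close>-step of the second path alone, which has to end there.\<close>
definition edge_rdpa :: "'a \<Rightarrow> ('a, 'i, 'd) rdpa" where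
  "edge_rdpa a = \<lparr>arity = 2, states = {0, 1, 2, 3, 4}, wstates = {1, 3, 4}, init = 0, final = {4},
     nidr = 0, ndr = 0,
     wtrans = (\<lambda>w. (1, w, 0)) ` {w. length w = 2} \<union> {(3, [None, Some a], 2)},
     dtrans = {(0, [], no_update, 1), (0, [INe (Inp 0) (Cst None)], no_update, 3),
               (2, [IEq (Inp 0) (Cst None)], no_update, 4)}\<rparr>"

lemma edge_rdpa_simps [simp]:
  "arity (edge_rdpa a) = 2" "init (edge_rdpa a) = 0" "final (edge_rdpa a) = {4}"
  "dtrans (edge_rdpa a) = {(0, [], no_update, 1), (0, [INe (Inp 0) (Cst None)], no_update, 3),
     (2, [IEq (Inp 0) (Cst None)], no_update, 4)}"
  "(p, w, q) \<in> wtrans (edge_rdpa a) \<longleftrightarrow>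
     p = 1 \<and> q = 0 \<and> length w = 2 \<or> p = 3 \<and> q = 2 \<and> w = [None, Some a]"
  by (auto simp: edge_rdpa_def)

lemma wf_edge_rdpa: "wf_rdpa (edge_rdpa a :: ('a::finite, 'i, 'd) rdpa)"
  by (auto simp: wf_rdpa_def edge_rdpa_def finite_pair_wletters upd_ok_no_update)

lemma acc_edge_rdpa:
  assumes "m = max (dplen du) (dplen dw)" "j \<le> m"
  shows "acc (edge_rdpa a) 0 R (dletter_at [du, dw] j) (conv_suffix [du, dw] j m) \<longleftrightarrow>
    j \<le> dplen du \<and> dplen dw = Suc (dplen du) \<and> fst (snd dw ! dplen du) = a"
  using assms(2)
proof (induction j rule: inc_induct)
  case base
  then show ?case using assms(1) by (auto simp: guard_sat_def inp_id_def dletter_at_def)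
next
  case (step j)
  let ?acc = "\<lambda>q i. acc (edge_rdpa a) q R (dletter_at [du, dw] i) (conv_suffix [du, dw] i m)"
  have unfold: "?acc 0 j \<longleftrightarrow> ?acc 0 (Suc j) \<or>
      fst (dletter_at [du, dw] j ! 0) \<noteq> None \<and> wletter_at [du, dw] (Suc j) = [None, Some a] \<and>
      ?acc 2 (Suc j)"
    using step(2) by (simp add: conv_suffix_Cons guard_sat_def inp_id_def conj_disj_distribR
        ex_disj_distrib del: split_paired_Ex)
  have first_present: "fst (dletter_at [du, dw] j ! 0) \<noteq> None \<longleftrightarrow> j \<le> dplen du"
    by (simp add: dletter_at_def)
  have last_edge: "wletter_at [du, dw] (Suc j) = [None, Some a] \<longleftrightarrow>
      dplen du \<le> j \<and> Suc j \<le> dplen dw \<and> fst (snd dw ! j) = a"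
    by (auto simp: wletter_at_def)
  have acc_state2: "?acc 2 (Suc j) \<longleftrightarrow> Suc j = m \<and> dplen du < Suc j"
    using step(2) by (cases "Suc j = m")
      (auto simp: conv_suffix_Cons guard_sat_def inp_id_def dletter_at_def)
  show ?case
  proof (cases "dplen du = j")
    case True
    then show ?thesis
      using assms(1) step(2) unfolding unfold first_present last_edge acc_state2 step(3)
      by (auto simp: max_def)
  next
    case False
    then show ?thesis
      unfolding unfold first_present last_edge acc_state2 step(3) by auto
  qed
qed

lemma accepts_edge_rdpa:
  "accepts (edge_rdpa a) [du, dw] \<longleftrightarrow> dplen dw = Suc (dplen du) \<and> fst (snd dw ! dplen du) = a"
  using acc_edge_rdpa[OF refl, of 0] by (simp add: accepts_conv_suffix)

definition same_data_rdpa :: "('a, 'i, 'd) rdpa" where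
  "same_data_rdpa = \<lparr>arity = 2, states = {0, 1, 2}, wstates = {1}, init = 0, final = {1},
     nidr = 0, ndr = 0,
     wtrans = (\<lambda>w. (1, w, 2)) ` {w. length w = 2},
     dtrans = {(0, [DEq (Inp 0) (Inp 1)], no_update, 1), (2, [], no_update, 1)}\<rparr>"

lemma same_data_rdpa_simps [simp]:
  "arity same_data_rdpa = 2" "init same_data_rdpa = 0" "final same_data_rdpa = {1}"
  "dtrans same_data_rdpa = {(0, [DEq (Inp 0) (Inp 1)], no_update, 1), (2, [], no_update, 1)}"
  "(p, w, q) \<in> wtrans same_data_rdpa \<longleftrightarrow> p = 1 \<and> q = 2 \<and> length w = 2"
  by (auto simp: same_data_rdpa_def)

lemma wf_same_data_rdpa: "wf_rdpa (same_data_rdpa :: ('a::finite, 'i, 'd) rdpa)"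
  by (auto simp: wf_rdpa_def same_data_rdpa_def finite_pair_wletters upd_ok_no_update)

lemma acc_same_data_rdpa_state2:
  assumes "length us = 2" "j \<le> m"
  shows "acc same_data_rdpa 2 R (dletter_at us j) (conv_suffix us j m)"
  using assms(2)
proof (induction j rule: inc_induct)
  case base
  then show ?case by (simp add: guard_sat_def)
next
  case (step j)
  then show ?case
    using assms(1) by (simp add: conv_suffix_Cons guard_sat_def)
qed

lemma accepts_same_data_rdpa: "accepts same_data_rdpa [du, dw] \<longleftrightarrow> snd (fst du) = snd (fst dw)"
proof -
  have "acc same_data_rdpa 0 R (dletter_at [du, dw] 0) (conv_suffix [du, dw] 0 m) \<longleftrightarrow>
      snd (dletter_at [du, dw] 0 ! 0) = snd (dletter_at [du, dw] 0 ! 1)" for R m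
    by (cases m) (simp_all add: conv_suffix_Cons acc_same_data_rdpa_state2 guard_sat_def inp_data_def)
  then show ?thesis
    by (simp add: accepts_conv_suffix dletter_at_def)
qed

text \<open>State 0 checks that both paths carry the same node at the current position; once the
  first path has ended, states 2 and 3 skip the rest of the second one.\<close>
definition prefix_rdpa :: "('a, 'i, 'd) rdpa" where
  "prefix_rdpa = \<lparr>arity = 2, states = {0, 1, 2, 3}, wstates = {1, 3}, init = 0, final = {1, 3},
     nidr = 0, ndr = 0,
     wtrans = (\<lambda>b. (1, [Some b, Some b], 0)) ` UNIV \<union> (\<lambda>x. (1, [None, x], 2)) ` UNIV
       \<union> (\<lambda>x. (3, [None, x], 2)) ` UNIV,
     dtrans = {(0, [IEq (Inp 0) (Inp 1), DEq (Inp 0) (Inp 1)], no_update, 1),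
               (2, [IEq (Inp 0) (Cst None)], no_update, 3)}\<rparr>"

lemma prefix_rdpa_simps [simp]:
  "arity prefix_rdpa = 2" "init prefix_rdpa = 0" "final prefix_rdpa = {1, 3}"
  "dtrans prefix_rdpa = {(0, [IEq (Inp 0) (Inp 1), DEq (Inp 0) (Inp 1)], no_update, 1),
     (2, [IEq (Inp 0) (Cst None)], no_update, 3)}"
  "(p, w, q) \<in> wtrans prefix_rdpa \<longleftrightarrow>
     p = 1 \<and> q = 0 \<and> (\<exists>b. w = [Some b, Some b]) \<or> (p = 1 \<or> p = 3) \<and> q = 2 \<and> (\<exists>x. w = [None, x])"
  by (auto simp: prefix_rdpa_def)

lemma wf_prefix_rdpa: "wf_rdpa (prefix_rdpa :: ('a::finite, 'i, 'd) rdpa)"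
  by (auto simp: wf_rdpa_def prefix_rdpa_def upd_ok_no_update)

lemma acc_prefix_rdpa_state2:
  assumes "m = max (dplen du) (dplen dw)" "j \<le> m"
  shows "acc prefix_rdpa 2 R (dletter_at [du, dw] j) (conv_suffix [du, dw] j m) \<longleftrightarrow> dplen du < j"
  using assms(2)
proof (induction j rule: inc_induct)
  case base
  then show ?case using assms(1) by (auto simp: guard_sat_def inp_id_def dletter_at_def)
next
  case (step j)
  have "acc prefix_rdpa 2 R (dletter_at [du, dw] j) (conv_suffix [du, dw] j m) \<longleftrightarrow>
      fst (dletter_at [du, dw] j ! 0) = None \<and> (\<exists>x. wletter_at [du, dw] (Suc j) = [None, x]) \<and>
      acc prefix_rdpa 2 R (dletter_at [du, dw] (Suc j)) (conv_suffix [du, dw] (Suc j) m)"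
    using step(2) by (simp add: conv_suffix_Cons guard_sat_def inp_id_def conj_disj_distribR
        ex_disj_distrib del: split_paired_Ex)
  then show ?case
    using step(3) by (auto simp: dletter_at_def wletter_at_def)
qed

lemma dletter_at_neq_after_end:
  assumes "dplen du < i \<or> dplen dw < i" "i \<le> max (dplen du) (dplen dw)"
  shows "dletter_at [du, dw] i ! 0 \<noteq> dletter_at [du, dw] i ! 1"
  using assms by (auto simp: dletter_at_def)

lemma acc_prefix_rdpa:
  assumes "m = max (dplen du) (dplen dw)" "j \<le> m"
  shows "acc prefix_rdpa 0 R (dletter_at [du, dw] j) (conv_suffix [du, dw] j m) \<longleftrightarrow>
    j \<le> dplen du \<and> dplen du \<le> dplen dw \<and>
    (\<forall>i \<in> {j..dplen du}. dletter_at [du, dw] i ! 0 = dletter_at [du, dw] i ! 1) \<and>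
    (\<forall>i \<in> {j..<dplen du}. fst (snd du ! i) = fst (snd dw ! i))"
  using assms(2)
proof (induction j rule: inc_induct)
  case base
  have "acc prefix_rdpa 0 R (dletter_at [du, dw] m) (conv_suffix [du, dw] m m) \<longleftrightarrow>
      dletter_at [du, dw] m ! 0 = dletter_at [du, dw] m ! 1"
    by (simp add: guard_sat_def inp_id_def inp_data_def prod_eq_iff)
  moreover have "dplen du = m \<and> dplen dw = m"
    if "dletter_at [du, dw] m ! 0 = dletter_at [du, dw] m ! 1"
    using dletter_at_neq_after_end[of du m dw] that assms(1)
    by (cases "dplen du < m \<or> dplen dw < m") auto
  ultimately show ?case
    by auto
next
  case (step j)
  let ?acc = "\<lambda>q i. acc prefix_rdpa q R (dletter_at [du, dw] i) (conv_suffix [du, dw] i m)"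
  have unfold: "?acc 0 j \<longleftrightarrow> dletter_at [du, dw] j ! 0 = dletter_at [du, dw] j ! 1 \<and>
      ((\<exists>b. wletter_at [du, dw] (Suc j) = [Some b, Some b]) \<and> ?acc 0 (Suc j) \<or>
       (\<exists>x. wletter_at [du, dw] (Suc j) = [None, x]) \<and> ?acc 2 (Suc j))"
    using step(2) by (simp add: conv_suffix_Cons guard_sat_def inp_id_def inp_data_def
        conj_disj_distribR ex_disj_distrib del: split_paired_Ex) (simp add: prod_eq_iff)
  have same_label: "(\<exists>b. wletter_at [du, dw] (Suc j) = [Some b, Some b]) \<longleftrightarrow>
      j < dplen du \<and> j < dplen dw \<and> fst (snd du ! j) = fst (snd dw ! j)"
    by (auto simp: wletter_at_def)
  have first_ended: "(\<exists>x. wletter_at [du, dw] (Suc j) = [None, x]) \<longleftrightarrow> dplen du \<le> j"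
    by (auto simp: wletter_at_def)
  have acc_state2: "?acc 2 (Suc j) \<longleftrightarrow> dplen du < Suc j"
    using acc_prefix_rdpa_state2[OF assms(1)] step(2) by simp
  consider "j < dplen du" | "j = dplen du" | "dplen du < j"
    by linarith
  then show ?case
  proof cases
    case 1
    then have "{j..<dplen du} = insert j {Suc j..<dplen du}"
      by auto
    with 1 show ?thesis
      unfolding unfold same_label first_ended acc_state2 step(3)
      by (auto simp: Icc_eq_insert_lb_nat)
  next
    case 2
    then show ?thesis
      using step(2) assms(1) unfolding unfold same_label first_ended acc_state2 by auto
  next
    case 3
    then show ?thesis
      using dletter_at_neq_after_end[of du j dw] step(2) assms(1) unfolding unfold by auto
  qed
qed

lemma accepts_prefix_rdpa:
  "accepts prefix_rdpa [du, dw] \<longleftrightarrow>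
    dplen du \<le> dplen dw \<and> fst du = fst dw \<and> (\<forall>i < dplen du. snd du ! i = snd dw ! i)"
proof -
  let ?same_node = "\<lambda>i. dletter_at [du, dw] i ! 0 = dletter_at [du, dw] i ! 1"
  have "accepts prefix_rdpa [du, dw] \<longleftrightarrow> dplen du \<le> dplen dw \<and>
      (\<forall>i \<in> {0..dplen du}. ?same_node i) \<and> (\<forall>i < dplen du. fst (snd du ! i) = fst (snd dw ! i))"
    using acc_prefix_rdpa[OF refl, of 0] by (simp add: accepts_conv_suffix atLeast0LessThan Ball_def)
  moreover have "(\<forall>i \<in> {0..dplen du}. ?same_node i) \<longleftrightarrow>
      fst du = fst dw \<and> (\<forall>i < dplen du. snd (snd du ! i) = snd (snd dw ! i))"
    if "dplen du \<le> dplen dw"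
  proof -
    have "(\<forall>i \<in> {0..dplen du}. ?same_node i) \<longleftrightarrow> ?same_node 0 \<and> (\<forall>i < dplen du. ?same_node (Suc i))"
      by (auto simp: less_Suc_eq_0_disj) (metis Suc_le_eq not0_implies_Suc)
    then show ?thesis
      using that by (auto simp: dletter_at_def prod_eq_iff)
  qed
  ultimately show ?thesis
    by (auto simp: prod_eq_iff)
qed

lemma datapath_eq_path_prefix_iff:
  assumes "plen r \<le> plen p"
  shows "datapath G r = datapath G (path_prefix p (plen r)) \<longleftrightarrow>
    fst (datapath G r) = fst (datapath G p) \<and>
    (\<forall>i < plen r. snd (datapath G r) ! i = snd (datapath G p) ! i)"
proof -
  have "length (snd (datapath G r)) = plen r" "length (snd (datapath G p)) = plen p"
    using dplen_datapath by (simp_all add: dplen_def)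
  then have "snd (datapath G r) = take (plen r) (snd (datapath G p)) \<longleftrightarrow>
      (\<forall>i < plen r. snd (datapath G r) ! i = snd (datapath G p) ! i)"
    using assms by (simp add: list_eq_iff_nth_eq)
  then show ?thesis
    by (simp add: datapath_path_prefix prod_eq_iff)
qed

lemma accepts_prefix_rdpa_iff_path_prefix:
  assumes "wf_dgraph G" "is_path G r" "is_path G p"
  shows "accepts prefix_rdpa [datapath G r, datapath G p] \<longleftrightarrow> (\<exists>k \<le> plen p. r = path_prefix p k)"
proof -
  have "accepts prefix_rdpa [datapath G r, datapath G p] \<longleftrightarrow>
      plen r \<le> plen p \<and> datapath G r = datapath G (path_prefix p (plen r))"
    using datapath_eq_path_prefix_iff[of r p G] by (auto simp: accepts_prefix_rdpa)
  also have "\<dots> \<longleftrightarrow> plen r \<le> plen p \<and> r = path_prefix p (plen r)"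
    using inj_onD[OF inj_on_datapath[OF assms(1)], of r "path_prefix p (plen r)"] assms(2)
      is_path_path_prefix[OF assms(3)]
    by (metis mem_Collect_eq)
  also have "\<dots> \<longleftrightarrow> (\<exists>k \<le> plen p. r = path_prefix p k)"
    by (metis plen_path_prefix)
  finally show ?thesis .
qed

lemma ex_position_iff_ex_prefix_path:
  assumes "wf_dgraph G" "is_path G p"
  shows "(\<exists>k \<le> plen p. P k (path_prefix p k)) \<longleftrightarrow>
    (\<exists>r. is_path G r \<and> accepts prefix_rdpa [datapath G r, datapath G p] \<and> P (plen r) r)"
proof
  assume "\<exists>k \<le> plen p. P k (path_prefix p k)"
  then obtain k where "k \<le> plen p" "P k (path_prefix p k)"
    by blast
  then show "\<exists>r. is_path G r \<and> accepts prefix_rdpa [datapath G r, datapath G p] \<and> P (plen r) r"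
    using is_path_path_prefix[OF assms(2), of k]
      accepts_prefix_rdpa_iff_path_prefix[OF assms(1) is_path_path_prefix[OF assms(2)] assms(2)]
    by (intro exI[of _ "path_prefix p k"]) auto
next
  assume "\<exists>r. is_path G r \<and> accepts prefix_rdpa [datapath G r, datapath G p] \<and> P (plen r) r"
  then obtain r where "is_path G r" "accepts prefix_rdpa [datapath G r, datapath G p]" "P (plen r) r"
    by blast
  then show "\<exists>k \<le> plen p. P k (path_prefix p k)"
    using accepts_prefix_rdpa_iff_path_prefix[OF assms(1) _ assms(2), of r] by auto
qed

definition fo_same_end :: "nat \<Rightarrow> nat \<Rightarrow> ('a, 'i, 'd) fo" where
  "fo_same_end u w = ExN 0 (FAnd (ExN 1 (Reach 1 u 0)) (ExN 1 (Reach 1 w 0)))"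

lemma fo_sat_same_end:
  assumes "wf_dgraph G" "is_path G (\<eta> u)" "is_path G (\<eta> w)"
  shows "fo_sat G \<nu> \<eta> (fo_same_end u w) \<longleftrightarrow> last (nodes (\<eta> u)) = last (nodes (\<eta> w))"
  using fst_in_V[OF assms(2)] fst_in_V[OF assms(3)] last_nodes_in_V[OF assms(1,2)]
    last_nodes_in_V[OF assms(1,3)]
  by (auto simp: fo_same_end_def)

text \<open>The fresh path variables \<open>u + w + 1\<close> and \<open>u + w + 2\<close> stand for the single-node paths
  at the two end nodes.\<close>
definition fo_same_end_data :: "nat \<Rightarrow> nat \<Rightarrow> ('a, 'i, 'd) fo" where
  "fo_same_end_data u w = ExN 0 (ExN 1 (FAnd (FAnd (ExN 2 (Reach 2 u 0)) (ExN 2 (Reach 2 w 1)))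
     (ExP (u + w + 1) (ExP (u + w + 2)
       (FAnd (FAnd (ExN 2 (Reach 0 (u + w + 1) 2)) (ExN 2 (Reach 1 (u + w + 2) 2)))
         (InA [u + w + 1, u + w + 2] same_data_rdpa))))))"

lemma fo_sat_same_end_data:
  assumes "wf_dgraph G" "is_path G (\<eta> u)" "is_path G (\<eta> w)"
  shows "fo_sat G \<nu> \<eta> (fo_same_end_data u w) \<longleftrightarrow>
    dataof G (last (nodes (\<eta> u))) = dataof G (last (nodes (\<eta> w)))"
    (is "_ \<longleftrightarrow> dataof G ?a = dataof G ?b")
proof -
  have fresh: "u + w + 1 \<noteq> u" "u + w + 1 \<noteq> w" "u + w + 2 \<noteq> u" "u + w + 2 \<noteq> w"
    "u + w + 1 \<noteq> u + w + 2"
    by auto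
  have ends: "?a \<in> V G" "?b \<in> V G" "fst (\<eta> u) \<in> V G" "fst (\<eta> w) \<in> V G"
    using fst_in_V[OF assms(2)] fst_in_V[OF assms(3)] last_nodes_in_V[OF assms(1,2)]
      last_nodes_in_V[OF assms(1,3)]
    by auto
  have "fo_sat G \<nu> \<eta> (fo_same_end_data u w) \<longleftrightarrow>
      (\<exists>r r'. is_path G r \<and> is_path G r' \<and> fst r = ?a \<and> fst r' = ?b \<and>
        accepts same_data_rdpa [datapath G r, datapath G r'])"
    (is "_ \<longleftrightarrow> (\<exists>r r'. ?starts r r')")
  proof
    assume "fo_sat G \<nu> \<eta> (fo_same_end_data u w)"
    then show "\<exists>r r'. ?starts r r'"
      using fresh by (auto simp: fo_same_end_data_def simp del: split_paired_Ex)
  next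
    assume "\<exists>r r'. ?starts r r'"
    then obtain r r' where "?starts r r'"
      by blast
    then show "fo_sat G \<nu> \<eta> (fo_same_end_data u w)"
      using ends fresh last_nodes_in_V[OF assms(1), of r] last_nodes_in_V[OF assms(1), of r']
      by (auto simp: fo_same_end_data_def simp del: split_paired_Ex)
  qed
  also have "\<dots> \<longleftrightarrow> dataof G ?a = dataof G ?b"
  proof
    assume "\<exists>r r'. ?starts r r'"
    then show "dataof G ?a = dataof G ?b"
      by (auto simp: accepts_same_data_rdpa datapath_def)
  next
    assume "dataof G ?a = dataof G ?b"
    then have "?starts (?a, []) (?b, [])"
      using is_path_single[OF ends(1)] is_path_single[OF ends(2)]
      by (simp add: accepts_same_data_rdpa datapath_def)
    then show "\<exists>r r'. ?starts r r'"
      by blast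
  qed
  finally show ?thesis .
qed

text \<open>The encoding of position variables used by \<open>repr_val\<close>.\<close>
definition pos_var :: "posvar \<Rightarrow> nat" where
  "pos_var x = 2 * prod_encode x + 1"

lemma pos_var_neq_path_var [simp]: "pos_var x \<noteq> 2 * p" "2 * p \<noteq> pos_var x"
  unfolding pos_var_def by presburger+

lemma pos_var_eq_iff [simp]: "pos_var x = pos_var y \<longleftrightarrow> x = y"
  by (auto simp: pos_var_def dest: inj_onD[OF inj_prod_encode])

fun fo_of_mwl :: "'a mwl \<Rightarrow> ('a, 'i, 'd) fo" where
  "fo_of_mwl (Edge a l m p) = InA [pos_var (l, p), pos_var (m, p)] (edge_rdpa a)"
| "fo_of_mwl (Lt x y) = InA [pos_var x, pos_var y] shorter_rdpa"
| "fo_of_mwl (EqId x y) = fo_same_end (pos_var x) (pos_var y)"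
| "fo_of_mwl (EqData x y) = fo_same_end_data (pos_var x) (pos_var y)"
| "fo_of_mwl (MNot f) = FNot (fo_of_mwl f)"
| "fo_of_mwl (MOr f g) = FNot (FAnd (FNot (fo_of_mwl f)) (FNot (fo_of_mwl g)))"
| "fo_of_mwl (ExPos x f) =
     ExP (pos_var x) (FAnd (InA [pos_var x, 2 * snd x] prefix_rdpa) (fo_of_mwl f))"
| "fo_of_mwl (ExPath p f) = ExP (2 * p) (fo_of_mwl f)"

lemma wf_fo_of_mwl: "wf_fo (fo_of_mwl \<phi> :: ('a::finite, 'i, 'd) fo)"
  by (induction \<phi>) (auto simp: fo_same_end_def fo_same_end_data_def wf_shorter_rdpa wf_edge_rdpa
      wf_same_data_rdpa wf_prefix_rdpa)

definition represents ::
    "(nat \<Rightarrow> ('v, 'a) path) \<Rightarrow> (posvar \<Rightarrow> nat) \<Rightarrow> (nat \<Rightarrow> ('v, 'a) path) \<Rightarrow> posvar set \<Rightarrow> bool" where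
  "represents \<mu> \<kappa> \<eta> X \<longleftrightarrow> (\<forall>p. \<eta> (2 * p) = \<mu> p) \<and>
     (\<forall>x \<in> X. \<kappa> x \<le> plen (\<mu> (snd x)) \<and> \<eta> (pos_var x) = path_prefix (\<mu> (snd x)) (\<kappa> x))"

lemma represents_subset: "represents \<mu> \<kappa> \<eta> Y \<Longrightarrow> X \<subseteq> Y \<Longrightarrow> represents \<mu> \<kappa> \<eta> X"
  by (auto simp: represents_def)

lemma represents_update_pos:
  assumes "represents \<mu> \<kappa> \<eta> (X - {x})" "k \<le> plen (\<mu> (snd x))"
  shows "represents \<mu> (\<kappa>(x := k)) (\<eta>(pos_var x := path_prefix (\<mu> (snd x)) k)) X"
  using assms by (auto simp: represents_def)

lemma represents_update_path:
  assumes "represents \<mu> \<kappa> \<eta> X" "\<forall>x \<in> X. snd x \<noteq> p"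
  shows "represents (\<mu>(p := r)) \<kappa> (\<eta>(2 * p := r)) X"
  using assms by (auto simp: represents_def)

lemma represents_repr_val:
  "(\<forall>x. \<kappa> x \<le> plen (\<mu> (snd x))) \<Longrightarrow> represents \<mu> \<kappa> (repr_val \<mu> \<kappa>) X"
  by (auto simp: represents_def repr_val_def pos_var_def)

lemma represents_node_at:
  assumes "represents \<mu> \<kappa> \<eta> X" "x \<in> X" "is_path G (\<mu> (snd x))"
  shows "is_path G (\<eta> (pos_var x))" "last (nodes (\<eta> (pos_var x))) = node_at \<mu> \<kappa> x"
proof -
  have "\<kappa> x \<le> plen (\<mu> (snd x))" "\<eta> (pos_var x) = path_prefix (\<mu> (snd x)) (\<kappa> x)"
    using assms(1,2) by (auto simp: represents_def)
  then show "is_path G (\<eta> (pos_var x))" "last (nodes (\<eta> (pos_var x))) = node_at \<mu> \<kappa> x"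
    using is_path_path_prefix[OF assms(3)] by (simp_all add: last_nodes_path_prefix node_at_def)
qed

lemma fo_sat_fo_of_mwl:
  assumes "wf_mwl \<phi>" "wf_dgraph G" "\<forall>p. is_path G (\<mu> p)" "represents \<mu> \<kappa> \<eta> (fpv \<phi>)"
  shows "mwl_sat G \<mu> \<kappa> \<phi> \<longleftrightarrow> fo_sat G \<nu> \<eta> (fo_of_mwl \<phi>)"
  using assms
proof (induction \<phi> arbitrary: \<mu> \<kappa> \<eta>)
  case (Edge a l m p)
  then have "\<kappa> (l, p) \<le> plen (\<mu> p)" "\<kappa> (m, p) \<le> plen (\<mu> p)"
    "\<eta> (pos_var (l, p)) = path_prefix (\<mu> p) (\<kappa> (l, p))"
    "\<eta> (pos_var (m, p)) = path_prefix (\<mu> p) (\<kappa> (m, p))"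
    by (auto simp: represents_def)
  then show ?case
    by (auto simp: accepts_edge_rdpa label_datapath nth_snd_path_prefix)
next
  case (Lt x y)
  then show ?case
    by (auto simp: accepts_shorter_rdpa represents_def)
next
  case (EqId x y)
  have "is_path G (\<eta> (pos_var z))" "last (nodes (\<eta> (pos_var z))) = node_at \<mu> \<kappa> z"
    if "z \<in> {x, y}" for z
    using represents_node_at[OF EqId.prems(4)[simplified] that] EqId.prems(3) by auto
  then show ?case
    using EqId.prems(2) by (simp add: fo_sat_same_end)
next
  case (EqData x y)
  have "is_path G (\<eta> (pos_var z))" "last (nodes (\<eta> (pos_var z))) = node_at \<mu> \<kappa> z"
    if "z \<in> {x, y}" for z
    using represents_node_at[OF EqData.prems(4)[simplified] that] EqData.prems(3) by auto
  then show ?case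
    using EqData.prems(2) by (simp add: fo_sat_same_end_data)
next
  case (MNot f)
  then show ?case by simp
next
  case (MOr f g)
  have "mwl_sat G \<mu> \<kappa> f \<longleftrightarrow> fo_sat G \<nu> \<eta> (fo_of_mwl f)"
    by (rule MOr.IH(1)) (use MOr.prems in \<open>auto intro: represents_subset\<close>)
  moreover have "mwl_sat G \<mu> \<kappa> g \<longleftrightarrow> fo_sat G \<nu> \<eta> (fo_of_mwl g)"
    by (rule MOr.IH(2)) (use MOr.prems in \<open>auto intro: represents_subset\<close>)
  ultimately show ?case
    by simp
next
  case (ExPos x f)
  let ?P = "\<mu> (snd x)"
  let ?sat_f = "\<lambda>r. fo_sat G \<nu> (\<eta>(pos_var x := r)) (fo_of_mwl f)"
  have "mwl_sat G \<mu> (\<kappa>(x := k)) f \<longleftrightarrow> ?sat_f (path_prefix ?P k)" if "k \<le> plen ?P" for k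
    using ExPos.IH[OF _ ExPos.prems(2,3)
        represents_update_pos[OF ExPos.prems(4)[unfolded fpv.simps] that]] ExPos.prems(1)
    by (simp add: fun_upd_def)
  then have "mwl_sat G \<mu> \<kappa> (ExPos x f) \<longleftrightarrow> (\<exists>k \<le> plen ?P. ?sat_f (path_prefix ?P k))"
    by auto
  also have "\<dots> \<longleftrightarrow> (\<exists>r. is_path G r \<and> accepts prefix_rdpa [datapath G r, datapath G ?P] \<and> ?sat_f r)"
    using ExPos.prems(3) by (intro ex_position_iff_ex_prefix_path[OF ExPos.prems(2)]) simp
  also have "\<dots> \<longleftrightarrow> fo_sat G \<nu> \<eta> (fo_of_mwl (ExPos x f))"
    using ExPos.prems(4) by (simp add: represents_def del: split_paired_Ex)
  finally show ?case .
next
  case (ExPath p f)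
  have "mwl_sat G (\<mu>(p := r)) \<kappa> f \<longleftrightarrow> fo_sat G \<nu> (\<eta>(2 * p := r)) (fo_of_mwl f)"
    if "is_path G r" for r
    using ExPath.IH[OF _ ExPath.prems(2) _
        represents_update_path[OF ExPath.prems(4)[unfolded fpv.simps]]] ExPath.prems(1,3) that
    by (simp add: fun_upd_def)
  then show ?case
    by (simp del: split_paired_Ex) blast
qed

theorem mainTheorem16:
  fixes \<phi> :: "('a::finite) mwl"
  assumes "infinite (UNIV :: 'i set)" and "infinite (UNIV :: 'd set)"
    and "wf_mwl \<phi>"
  shows "\<exists>\<psi> :: ('a, 'i, 'd) fo. wf_fo \<psi> \<and>
    (\<forall>(G :: (nat, 'a, 'i, 'd) dgraph) \<mu> \<kappa> \<nu>.
       wf_dgraph G \<longrightarrow> (\<forall>p. is_path G (\<mu> p)) \<longrightarrow>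
       (\<forall>x. \<kappa> x \<le> plen (\<mu> (snd x))) \<longrightarrow>
       (mwl_sat G \<mu> \<kappa> \<phi> \<longleftrightarrow> fo_sat G \<nu> (repr_val \<mu> \<kappa>) \<psi>))"
proof (intro exI[of _ "fo_of_mwl \<phi>"] conjI allI impI)
  show "wf_fo (fo_of_mwl \<phi> :: ('a, 'i, 'd) fo)"
    by (rule wf_fo_of_mwl)
  fix G :: "(nat, 'a, 'i, 'd) dgraph" and \<mu> :: "nat \<Rightarrow> (nat, 'a) path"
    and \<kappa> :: "posvar \<Rightarrow> nat" and \<nu> :: "nat \<Rightarrow> nat"
  assume "wf_dgraph G" "\<forall>p. is_path G (\<mu> p)" "\<forall>x. \<kappa> x \<le> plen (\<mu> (snd x))"
  then show "mwl_sat G \<mu> \<kappa> \<phi> \<longleftrightarrow> fo_sat G \<nu> (repr_val \<mu> \<kappa>) (fo_of_mwl \<phi>)"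
    using fo_sat_fo_of_mwl[OF assms(3)] represents_repr_val by blast
qed

end
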